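(* Assume the standing assumptions in the context and let $\theta\in\mathbb{R}^d$ with $\|\nabla f(\theta)\|>0$ and $\epsilon,\delta>0$. Then the loop of INEXACTGRADIENT$(\theta,\epsilon,\delta)$ terminates after finitely many passes, returning $z$ such that $-z$ is a descent direction for $f$ at $\theta$ (i.e. $z^T\nabla f(\theta)>0$).
   Context: Bilevel setting: $g:\mathbb{R}^n\to\mathbb{R}$, $h:\mathbb{R}^n\times\mathbb{R}^d\to\mathbb{R}$, $\hat{x}(\theta)=\arg\min_xh(x,\theta)$, $f(\theta)=g(\hat{x}(\theta))$. Standing assumptions: (A1) $h$ twice differentiable in $x$, for each $\theta$ there are $0<\mu(\theta)\le L(\theta)$ with $\mu(\theta)I\preceq\nabla_x^2h(x,\theta)\preceq L(\theta)I$ for all $x$, $\nabla_xh,\nabla^2_xh$ continuous in $\theta$; (A2) $\nabla_x^2h(x,\theta)$ is $L_H$-Lipschitz in $x$ and $\nabla^2_{x\theta}h(x,\theta)\in\mathbb{R}^{n\times d}$ (Jacobian of $\theta\mapsto\nabla_xh(x,\theta)$) is $L_J$-Lipschitz in $x$, uniformly in $\theta$; $L_{H^{-1}}$ is the Lipschitz constant in $x$ of $\nabla_x^2h(x,\theta)^{-1}$ uniformly in $\theta$. (B) $f$ continuously differentiable with $L_{\nabla f}$-Lipschitz gradient, $g$ continuously differentiable with $L_{\nabla g}$-Lipschitz gradient, $L_{\nabla f},L_{\nabla g}>0$, $g$ bounded below. INEXACTGRADIENT$(\theta,\epsilon,\delta)$ with parameters $\eta\in(0,1)$, $\underline{\nu}\in(0,1)$: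 repeat: (i) compute any $\tilde{x}$ with $\|\nabla_xh(\tilde{x},\theta)\|\le\epsilon\mu(\theta)$; (ii) compute any $q$ with $\|\nabla^2_xh(\tilde{x},\theta)q-\nabla g(\tilde{x})\|\le\delta$; (iii) $z=-\nabla^2_{x\theta}h(\tilde{x},\theta)^Tq$; (iv) $\omega=c(\tilde{x})\epsilon+\frac{\|\nabla^2_{x\theta}h(\tilde{x},\theta)\|}{\mu(\theta)}\delta+\frac{L_JL_{\nabla g}}{\mu(\theta)}\epsilon^2$, with $c(x)=\frac{L_{\nabla g}\|\nabla^2_{x\theta}h(x,\theta)\|}{\mu(\theta)}+L_{H^{-1}}\|\nabla g(x)\|\|\nabla^2_{x\theta}h(x,\theta)\|+\frac{L_J\|\nabla g(x)\|}{\mu(\theta)}$; (v) if $\omega\le(1-\eta)\|z\|$ return $(z,\epsilon,\delta)$; else $\delta\leftarrow\underline{\nu}\delta$, $\epsilon\leftarrow\underline{\nu}\epsilon$ and repeat. *)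

theory Defs
  imports "HOL-Analysis.Analysis"
begin

definition opnorm :: "real^'m^'k \<Rightarrow> real" where
  "opnorm M = onorm (\<lambda>v. M *v v)"

definition xhat :: "(real^'n \<Rightarrow> real^'d \<Rightarrow> real) \<Rightarrow> real^'d \<Rightarrow> real^'n" where
  "xhat h \<theta> = (THE x. \<forall>y. h x \<theta> \<le> h y \<theta>)"

definition cfun :: "real \<Rightarrow> real \<Rightarrow> real \<Rightarrow> (real^'n \<Rightarrow> real^'n)
     \<Rightarrow> (real^'n \<Rightarrow> real^'d \<Rightarrow> real^'d^'n) \<Rightarrow> (real^'d \<Rightarrow> real)
     \<Rightarrow> real^'n \<Rightarrow> real^'d \<Rightarrow> real" where
  "cfun Lg LHinv LJ gg J mu x \<theta> =
     Lg * opnorm (J x \<theta>) / mu \<theta> + LHinv * norm (gg x) * opnorm (J x \<theta>)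
     + LJ * norm (gg x) / mu \<theta>"

definition omega :: "real \<Rightarrow> real \<Rightarrow> real \<Rightarrow> (real^'n \<Rightarrow> real^'n)
     \<Rightarrow> (real^'n \<Rightarrow> real^'d \<Rightarrow> real^'d^'n) \<Rightarrow> (real^'d \<Rightarrow> real)
     \<Rightarrow> real^'n \<Rightarrow> real^'d \<Rightarrow> real \<Rightarrow> real \<Rightarrow> real" where
  "omega Lg LHinv LJ gg J mu x \<theta> eps del =
     cfun Lg LHinv LJ gg J mu x \<theta> * eps + opnorm (J x \<theta>) / mu \<theta> * del
     + LJ * Lg / mu \<theta> * eps ^ 2"

text \<open>Direction z = - J^T q of step (iii), J the mixed second derivative.\<close>
definition zdir :: "(real^'n \<Rightarrow> real^'d \<Rightarrow> real^'d^'n) \<Rightarrow> real^'n \<Rightarrow> real^'d \<Rightarrow> real^'n \<Rightarrow> real^'d" where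
  "zdir J x \<theta> q = - (transpose (J x \<theta>) *v q)"

end

(* The exact hypergradient is grad f(theta) = - J^T H^-1 grad g(xhat theta): differentiate
   grad_x h (xhat theta, theta) = 0 implicitly, and note that the Hessian H is symmetric because
   it is Lipschitz, so H^-T = H^-1.  Strong convexity turns the stopping rule
   |grad_x h (x, theta)| <= eps mu into |x - xhat theta| <= eps, and comparing z with the exact
   formula term by term gives |z - grad f(theta)| <= omega.  As eps and delta shrink
   geometrically, omega tends to 0 while z tends to grad f(theta) <> 0, so the test
   omega <= (1 - eta) |z| eventually passes; once it passes, |z - grad f(theta)| < |z|,
   which forces z . grad f(theta) > 0. *)

theory Submission
  imports Defs
begin

lemma opnorm_nonneg: "0 \<le> opnorm (A::real^'m^'k)"
  unfolding opnorm_def by (rule onorm_pos_le) simp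

lemma norm_matrix_vector_mult_le: "norm ((A::real^'m^'k) *v v) \<le> opnorm A * norm v"
  unfolding opnorm_def by (rule onorm) simp

lemma opnorm_le_norm: "opnorm (A::real^'m^'k) \<le> real CARD('k) * real CARD('m) * norm A"
proof -
  have "\<bar>A $ i $ j\<bar> \<le> norm A" for i j
    using component_le_norm_cart[of "A $ i" j] Finite_Cartesian_Product.norm_nth_le[of A i] by linarith
  then have "(\<Sum>i\<in>UNIV. \<Sum>j\<in>UNIV. \<bar>A $ i $ j\<bar>) \<le> (\<Sum>i::'k\<in>UNIV. \<Sum>j::'m\<in>UNIV. norm A)"
    by (intro sum_mono)
  then show ?thesis
    using onorm_le_matrix_component_sum[of A] by (simp add: opnorm_def)
qed

lemma tendsto_opnorm_diff_zero:
  assumes "(A \<longlongrightarrow> (A0::real^'m^'k)) F"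
  shows "((\<lambda>t. opnorm (A t - A0)) \<longlongrightarrow> 0) F"
proof (rule tendsto_sandwich)
  show "\<forall>\<^sub>F t in F. 0 \<le> opnorm (A t - A0)" by (simp add: opnorm_nonneg)
  show "\<forall>\<^sub>F t in F. opnorm (A t - A0) \<le> real CARD('k) * real CARD('m) * norm (A t - A0)"
    by (simp add: opnorm_le_norm)
  have "((\<lambda>t. norm (A t - A0)) \<longlongrightarrow> 0) F"
    using assms by (simp add: tendsto_norm_zero_iff LIM_zero_iff)
  then show "((\<lambda>t. real CARD('k) * real CARD('m) * norm (A t - A0)) \<longlongrightarrow> 0) F"
    by (auto intro: tendsto_mult_right_zero)
qed simp

lemma norm_transpose_mult_le: "norm (transpose (A::real^'m^'k) *v v) \<le> opnorm A * norm v"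
proof -
  let ?u = "transpose A *v v"
  have "(norm ?u)\<^sup>2 = v \<bullet> (A *v ?u)" by (simp add: power2_norm_eq_inner dot_lmul_matrix)
  also have "\<dots> \<le> norm v * (opnorm A * norm ?u)"
    by (rule order_trans[OF norm_cauchy_schwarz]) (simp add: mult_left_mono norm_matrix_vector_mult_le)
  finally have "norm ?u * norm ?u \<le> (opnorm A * norm v) * norm ?u"
    by (simp add: power2_eq_square algebra_simps)
  then show ?thesis
    by (cases "norm ?u = 0") (auto simp: opnorm_nonneg)
qed

lemma opnorm_add: "opnorm ((A::real^'m^'k) + B) \<le> opnorm A + opnorm B"
  unfolding opnorm_def using onorm_triangle[of "(*v) A" "(*v) B"]
  by (simp add: matrix_vector_mult_add_rdistrib[symmetric])

lemma opnorm_diff_triangle: "opnorm ((A::real^'m^'k) - B) \<le> opnorm (A - C) + opnorm (C - B)"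
  using opnorm_add[of "A - C" "C - B"] by simp

lemma abs_quadratic_form_le: "\<bar>v \<bullet> ((A::real^'m^'m) *v v)\<bar> \<le> opnorm A * (norm v)\<^sup>2"
proof -
  have "\<bar>v \<bullet> (A *v v)\<bar> \<le> norm v * (opnorm A * norm v)"
    by (rule order_trans[OF Cauchy_Schwarz_ineq2]) (simp add: mult_left_mono norm_matrix_vector_mult_le)
  then show ?thesis by (simp add: power2_eq_square algebra_simps)
qed

lemma lipschitz_const_nonneg:
  assumes "\<And>x y::real^'n. F x y \<le> L * norm (x - y)" and "\<And>x y. 0 \<le> F x y"
  shows "0 \<le> (L::real)"
proof -
  obtain v :: "real^'n" where "v \<noteq> 0" using zero_neq_one by blast
  moreover have "0 \<le> L * norm (v - 0)" using assms[of v 0] by linarith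
  ultimately show ?thesis by (simp add: zero_le_mult_iff)
qed

lemma has_derivative_along_line:
  assumes "(f has_derivative f') (at (x + \<tau> *\<^sub>R d))"
  shows "((\<lambda>s. f (x + s *\<^sub>R d)) has_derivative (\<lambda>s. f' (s *\<^sub>R d))) (at \<tau>)"
proof -
  have "((\<lambda>s. x + s *\<^sub>R d) has_derivative (\<lambda>s. s *\<^sub>R d)) (at \<tau>)"
    by (auto intro!: derivative_eq_intros)
  from has_derivative_compose[OF this assms] show ?thesis .
qed

lemma norm_add3_le: "norm (a + b + c) \<le> norm a + norm b + norm (c::'a::real_normed_vector)"
  by (rule order_trans[OF norm_triangle_ineq]) (simp add: norm_triangle_ineq)

lemma transpose_diff: "transpose (A - B) = transpose A - (transpose B :: 'a::ring_1^'n^'m)"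
  by (simp add: transpose_def vec_eq_iff)

lemma real_eq_0_if_abs_le_linear:
  assumes "\<And>s::real. 0 < s \<Longrightarrow> \<bar>D\<bar> \<le> C * s"
  shows "D = (0::real)"
proof (rule ccontr)
  assume "D \<noteq> 0"
  define s where "s = \<bar>D\<bar> / (2 * (\<bar>C\<bar> + 1))"
  have s: "0 < s" using \<open>D \<noteq> 0\<close> unfolding s_def by (intro divide_pos_pos) auto
  have "\<bar>D\<bar> \<le> \<bar>C\<bar> * s" using assms[OF s] abs_ge_self[of C] s by (meson less_imp_le mult_right_mono order_trans)
  also have "\<dots> < (2 * (\<bar>C\<bar> + 1)) * s" using s by (intro mult_strict_right_mono) auto
  also have "\<dots> = \<bar>D\<bar>" unfolding s_def by simp
  finally show False by simp
qed

locale lower_level =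
  fixes h :: "real^'n \<Rightarrow> real^'d \<Rightarrow> real"
    and gx :: "real^'n \<Rightarrow> real^'d \<Rightarrow> real^'n"
    and Hx :: "real^'n \<Rightarrow> real^'d \<Rightarrow> real^'n^'n"
    and mu :: "real^'d \<Rightarrow> real"
    and LH :: real
  assumes h_grad: "\<And>x t. ((\<lambda>y. h y t) has_derivative (\<lambda>v. gx x t \<bullet> v)) (at x)"
    and h_hess: "\<And>x t. ((\<lambda>y. gx y t) has_derivative (\<lambda>v. Hx x t *v v)) (at x)"
    and mu_pos: "\<And>t. 0 < mu t"
    and hess_lower: "\<And>x t v. mu t * (norm v)\<^sup>2 \<le> v \<bullet> (Hx x t *v v)"
    and H_lip: "\<And>x y t. opnorm (Hx x t - Hx y t) \<le> LH * norm (x - y)"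
begin

lemma LH_nonneg: "0 \<le> LH"
  using lipschitz_const_nonneg[of "\<lambda>x y. opnorm (Hx x undefined - Hx y undefined)"]
  by (simp add: H_lip opnorm_nonneg)

lemma hess_psd: "0 \<le> v \<bullet> (Hx x t *v v)"
  using hess_lower[of t v x] mu_pos[of t] by (meson less_imp_le mult_nonneg_nonneg order_trans zero_le_power2)

lemma gradient_strongly_monotone_on:
  assumes "convex S" and hess_S: "\<And>y v. y \<in> S \<Longrightarrow> m * (norm v)\<^sup>2 \<le> v \<bullet> (Hx y t *v v)"
    and "x \<in> S" "y \<in> S"
  shows "m * (norm (y - x))\<^sup>2 \<le> (gx y t - gx x t) \<bullet> (y - x)"
proof -
  define d where "d = y - x"
  define \<psi> where "\<psi> = (\<lambda>s. gx (x + s *\<^sub>R d) t \<bullet> d)"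
  have D: "DERIV \<psi> s :> d \<bullet> (Hx (x + s *\<^sub>R d) t *v d)" for s
    unfolding \<psi>_def
    by (rule has_derivative_imp_has_field_derivative[OF
          has_derivative_inner_left[OF has_derivative_along_line[OF h_hess]]])
       (simp add: matrix_vector_mult_scaleR inner_commute)
  obtain \<tau> where \<tau>: "0 < \<tau>" "\<tau> < 1" "\<psi> 1 - \<psi> 0 = d \<bullet> (Hx (x + \<tau> *\<^sub>R d) t *v d)"
    using MVT2[of 0 1 \<psi> "\<lambda>s. d \<bullet> (Hx (x + s *\<^sub>R d) t *v d)"] D by auto
  have "x + \<tau> *\<^sub>R d = (1 - \<tau>) *\<^sub>R x + \<tau> *\<^sub>R y" by (simp add: d_def algebra_simps)
  then have "x + \<tau> *\<^sub>R d \<in> S" using assms \<tau> by (simp add: convex_def)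
  then have "m * (norm d)\<^sup>2 \<le> \<psi> 1 - \<psi> 0" unfolding \<tau>(3) by (rule hess_S)
  then show ?thesis by (simp add: \<psi>_def d_def inner_diff_left)
qed

lemma gradient_strongly_monotone: "mu t * (norm (y - x))\<^sup>2 \<le> (gx y t - gx x t) \<bullet> (y - x)"
  using gradient_strongly_monotone_on[of UNIV "mu t" t x y] hess_lower by simp

lemma gradient_monotone: "0 \<le> (gx y t - gx x t) \<bullet> (y - x)"
  using gradient_strongly_monotone_on[of UNIV 0 t x y] hess_psd by simp

lemma convex_first_order: "h x t + gx x t \<bullet> (y - x) \<le> h y t"
proof -
  define d where "d = y - x"
  define \<phi> where "\<phi> = (\<lambda>s. h (x + s *\<^sub>R d) t)"
  have D: "DERIV \<phi> s :> gx (x + s *\<^sub>R d) t \<bullet> d" for s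
    unfolding \<phi>_def
    by (rule has_derivative_imp_has_field_derivative[OF has_derivative_along_line[OF h_grad]]) simp
  obtain \<tau> where \<tau>: "0 < \<tau>" "\<tau> < 1" "\<phi> 1 - \<phi> 0 = gx (x + \<tau> *\<^sub>R d) t \<bullet> d"
    using MVT2[of 0 1 \<phi> "\<lambda>s. gx (x + s *\<^sub>R d) t \<bullet> d"] D by auto
  have "0 \<le> (gx (x + \<tau> *\<^sub>R d) t - gx x t) \<bullet> ((x + \<tau> *\<^sub>R d) - x)" by (rule gradient_monotone)
  then have "0 \<le> (gx (x + \<tau> *\<^sub>R d) t - gx x t) \<bullet> d" using \<tau> by (simp add: zero_le_mult_iff)
  then show ?thesis using \<tau> by (simp add: \<phi>_def d_def inner_diff_left)
qed

lemma critical_point_unique: "gx x t = 0 \<Longrightarrow> gx y t = 0 \<Longrightarrow> x = y"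
  using gradient_strongly_monotone[of t y x] mu_pos[of t] by (simp add: mult_le_0_iff)

lemma quadratic_growth: "h 0 t + gx 0 t \<bullet> y + mu t / 4 * (norm y)\<^sup>2 \<le> h y t"
proof -
  let ?m = "(1/2) *\<^sub>R y"
  have "h ?m t + gx ?m t \<bullet> y / 2 \<le> h y t"
    using convex_first_order[of ?m t y] by (simp add: inner_diff_right)
  moreover have "h 0 t + gx 0 t \<bullet> y / 2 \<le> h ?m t" using convex_first_order[of 0 t ?m] by simp
  moreover have "mu t / 4 * (norm y)\<^sup>2 \<le> gx ?m t \<bullet> y / 2 - gx 0 t \<bullet> y / 2"
    using gradient_strongly_monotone[of t ?m 0] by (simp add: inner_diff_left power2_eq_square algebra_simps)
  ultimately show ?thesis by linarith
qed

lemma minimiser_exists: "\<exists>x. \<forall>y. h x t \<le> h y t"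
proof -
  define R where "R = 4 * norm (gx 0 t) / mu t"
  have m: "0 < mu t" by (rule mu_pos)
  have R: "0 \<le> R" unfolding R_def using m by simp
  have "continuous_on (cball 0 R) (\<lambda>y. h y t)"
    by (rule has_derivative_continuous_on) (rule has_derivative_at_withinI[OF h_grad])
  moreover have "cball 0 R \<noteq> {}" using R by simp
  ultimately obtain x where x: "x \<in> cball 0 R" "\<forall>y\<in>cball 0 R. h x t \<le> h y t"
    using continuous_attains_inf[OF compact_cball] by blast
  have "h x t \<le> h y t" for y
  proof (cases "norm y \<le> R")
    case True
    then show ?thesis using x by simp
  next
    case False
    have "4 * norm (gx 0 t) < mu t * norm y" using False m unfolding R_def by (simp add: field_simps)
    then have "norm y * (4 * norm (gx 0 t)) < norm y * (mu t * norm y)"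
      using False R by (intro mult_strict_left_mono) auto
    then have "norm (gx 0 t) * norm y < mu t / 4 * (norm y)\<^sup>2"
      by (simp add: power2_eq_square algebra_simps)
    moreover have "- (norm (gx 0 t) * norm y) \<le> gx 0 t \<bullet> y"
      using Cauchy_Schwarz_ineq2[of "gx 0 t" y] by linarith
    ultimately have "h 0 t < h y t" using quadratic_growth[of t y] by linarith
    moreover have "h x t \<le> h 0 t" using x R by simp
    ultimately show ?thesis by simp
  qed
  then show ?thesis by blast
qed

lemma minimiser_critical:
  assumes "\<forall>y. h x t \<le> h y t"
  shows "gx x t = 0"
proof -
  have "(\<lambda>v. gx x t \<bullet> v) = (\<lambda>v. 0)"
    by (rule has_derivative_local_min[OF h_grad]) (simp add: assms)
  then show ?thesis by (metis inner_eq_zero_iff)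
qed

lemma xhat_critical: "gx (xhat h t) t = 0"
proof -
  obtain x where x: "\<forall>y. h x t \<le> h y t" using minimiser_exists by blast
  have "\<exists>!x. \<forall>y. h x t \<le> h y t"
    using x critical_point_unique[OF minimiser_critical minimiser_critical] by blast
  then have "\<forall>y. h (xhat h t) t \<le> h y t" unfolding xhat_def by (rule theI')
  then show ?thesis by (rule minimiser_critical)
qed

lemma dist_xhat_le: "norm (x - xhat h t) \<le> norm (gx x t) / mu t"
proof -
  let ?d = "x - xhat h t"
  have m: "0 < mu t" by (rule mu_pos)
  have "mu t * (norm ?d)\<^sup>2 \<le> gx x t \<bullet> ?d"
    using gradient_strongly_monotone[of t x "xhat h t"] by (simp add: xhat_critical)
  also have "\<dots> \<le> norm (gx x t) * norm ?d" by (rule norm_cauchy_schwarz)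
  finally have "(mu t * norm ?d) * norm ?d \<le> norm (gx x t) * norm ?d"
    by (simp add: power2_eq_square algebra_simps)
  then have "mu t * norm ?d \<le> norm (gx x t)" by (cases "norm ?d = 0") (auto simp: m)
  then show ?thesis using m by (simp add: field_simps)
qed

lemma gradient_linearization_error: "norm (gx (p + c) t - gx p t - Hx p t *v c) \<le> LH * (norm c)\<^sup>2"
proof -
  have "norm (gx (p + c) t - gx p t - Hx p t *v ((p + c) - p)) \<le> norm ((p + c) - p) * (LH * norm c)"
  proof (rule differentiable_bound_linearization[where S="cball p (norm c)" and f="\<lambda>y. gx y t"
          and f'="\<lambda>y v. Hx y t *v v"])
    fix \<tau> :: real assume "\<tau> \<in> {0..1}"
    then show "p + \<tau> *\<^sub>R ((p + c) - p) \<in> cball p (norm c)"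
      by (simp add: dist_norm mult_left_le_one_le)
  next
    fix y assume "y \<in> cball p (norm c)"
    have "(\<lambda>v. Hx y t *v v) - (\<lambda>v. Hx p t *v v) = (\<lambda>v. (Hx y t - Hx p t) *v v)"
      by (simp add: fun_eq_iff matrix_vector_mult_diff_rdistrib)
    then have "onorm ((\<lambda>v. Hx y t *v v) - (\<lambda>v. Hx p t *v v)) = opnorm (Hx y t - Hx p t)"
      by (simp add: opnorm_def)
    also have "\<dots> \<le> LH * norm (y - p)" by (rule H_lip)
    also have "\<dots> \<le> LH * norm c"
      using \<open>y \<in> cball p (norm c)\<close> LH_nonneg by (simp add: dist_norm norm_minus_commute mult_left_mono)
    finally show "onorm ((\<lambda>v. Hx y t *v v) - (\<lambda>v. Hx p t *v v)) \<le> LH * norm c" .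
  qed (auto intro: has_derivative_at_withinI[OF h_hess])
  then show ?thesis by (simp add: power2_eq_square mult.commute mult.left_commute)
qed

lemma second_difference_approx:
  "\<bar>h (x + a + c) t - h (x + a) t - h (x + c) t + h x t - a \<bullet> (Hx x t *v c)\<bar>
     \<le> LH * ((norm c)\<^sup>2 + norm a * norm c) * norm a"
proof -
  define F where "F u = h (x + u + c) t - h (x + u) t - (Hx x t *v c) \<bullet> u" for u
  define G where "G u = gx (x + u + c) t - gx (x + u) t - Hx x t *v c" for u
  define S where "S = cball (0::real^'n) (norm a)"
  have "norm (F a - F 0) \<le> LH * ((norm c)\<^sup>2 + norm a * norm c) * norm (a - 0)"
  proof (rule differentiable_bound[where S=S and f'="\<lambda>u v. G u \<bullet> v"])
    fix u :: "real^'n"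
    have "((\<lambda>u. x + u + c) has_derivative (\<lambda>v. v)) (at u)" "((\<lambda>u. x + u) has_derivative (\<lambda>v. v)) (at u)"
      by (auto intro!: derivative_eq_intros)
    then have "((\<lambda>u. h (x + u + c) t) has_derivative (\<lambda>v. gx (x + u + c) t \<bullet> v)) (at u)"
      and "((\<lambda>u. h (x + u) t) has_derivative (\<lambda>v. gx (x + u) t \<bullet> v)) (at u)"
      by (auto intro: has_derivative_compose[OF _ h_grad])
    then have "(F has_derivative (\<lambda>v. G u \<bullet> v)) (at u)"
      unfolding F_def G_def inner_diff_left
      by (intro has_derivative_diff has_derivative_inner_right has_derivative_ident)
    then show "(F has_derivative (\<lambda>v. G u \<bullet> v)) (at u within S)"
      by (rule has_derivative_at_withinI)
  next
    fix u assume u: "u \<in> S"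
    have "G u = (gx (x + u + c) t - gx (x + u) t - Hx (x + u) t *v c) + (Hx (x + u) t - Hx x t) *v c"
      by (simp add: G_def matrix_vector_mult_diff_rdistrib)
    then have "norm (G u) \<le> LH * (norm c)\<^sup>2 + opnorm (Hx (x + u) t - Hx x t) * norm c"
      using gradient_linearization_error[of "x + u" c t] norm_matrix_vector_mult_le[of "Hx (x + u) t - Hx x t" c]
      by (smt (verit) add.assoc norm_triangle_ineq)
    moreover have "opnorm (Hx (x + u) t - Hx x t) * norm c \<le> LH * norm a * norm c"
      using H_lip[where x="x + u" and y=x and t=t] u LH_nonneg unfolding S_def
      by (intro mult_right_mono) (auto intro: order_trans mult_left_mono)
    ultimately have "norm (G u) \<le> LH * ((norm c)\<^sup>2 + norm a * norm c)" by (simp add: algebra_simps)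
    then show "onorm (\<lambda>v. G u \<bullet> v) \<le> LH * ((norm c)\<^sup>2 + norm a * norm c)"
      by (intro onorm_le) (metis Cauchy_Schwarz_ineq2 mult_right_mono norm_ge_zero order_trans real_norm_def)
  qed (auto simp: S_def)
  moreover have "F a - F 0 = h (x + a + c) t - h (x + a) t - h (x + c) t + h x t - a \<bullet> (Hx x t *v c)"
    by (simp add: F_def inner_commute)
  ultimately show ?thesis by simp
qed

text \<open>Both a \<bullet> H b and b \<bullet> H a approximate the same second difference of h up to
  O(s^3), by the Lipschitz bound on H.\<close>
lemma hess_symmetric: "a \<bullet> (Hx x t *v b) = b \<bullet> (Hx x t *v a)"
proof -
  define K where "K = LH * ((norm b)\<^sup>2 + norm a * norm b) * norm a + LH * ((norm a)\<^sup>2 + norm b * norm a) * norm b"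
  have "\<bar>a \<bullet> (Hx x t *v b) - b \<bullet> (Hx x t *v a)\<bar> \<le> K * s" if s: "0 < s" for s
  proof -
    let ?D = "h (x + s *\<^sub>R a + s *\<^sub>R b) t - h (x + s *\<^sub>R a) t - h (x + s *\<^sub>R b) t + h x t"
    have 1: "\<bar>?D - (s *\<^sub>R a) \<bullet> (Hx x t *v (s *\<^sub>R b))\<bar>
        \<le> LH * ((norm (s *\<^sub>R b))\<^sup>2 + norm (s *\<^sub>R a) * norm (s *\<^sub>R b)) * norm (s *\<^sub>R a)"
      using second_difference_approx[of x "s *\<^sub>R a" "s *\<^sub>R b" t] by simp
    have 2: "\<bar>?D - (s *\<^sub>R b) \<bullet> (Hx x t *v (s *\<^sub>R a))\<bar>
        \<le> LH * ((norm (s *\<^sub>R a))\<^sup>2 + norm (s *\<^sub>R b) * norm (s *\<^sub>R a)) * norm (s *\<^sub>R b)"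
      using second_difference_approx[of x "s *\<^sub>R b" "s *\<^sub>R a" t] by (simp add: algebra_simps)
    have "(?D - (s *\<^sub>R b) \<bullet> (Hx x t *v (s *\<^sub>R a))) - (?D - (s *\<^sub>R a) \<bullet> (Hx x t *v (s *\<^sub>R b)))
        = s\<^sup>2 * (a \<bullet> (Hx x t *v b) - b \<bullet> (Hx x t *v a))"
      by (simp add: matrix_vector_mult_scaleR power2_eq_square algebra_simps)
    then have "s\<^sup>2 * \<bar>a \<bullet> (Hx x t *v b) - b \<bullet> (Hx x t *v a)\<bar>
        = \<bar>(?D - (s *\<^sub>R b) \<bullet> (Hx x t *v (s *\<^sub>R a))) - (?D - (s *\<^sub>R a) \<bullet> (Hx x t *v (s *\<^sub>R b)))\<bar>"
      by (simp add: abs_mult)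
    also have "\<dots> \<le> s\<^sup>2 * (K * s)"
      using 1 2 s unfolding K_def by (simp add: power2_eq_square algebra_simps)
    finally show ?thesis using s by simp
  qed
  then show ?thesis using real_eq_0_if_abs_le_linear by (metis eq_iff_diff_eq_0)
qed

lemma hess_invertible: "Hx x t ** matrix_inv (Hx x t) = mat 1 \<and> matrix_inv (Hx x t) ** Hx x t = mat 1"
proof -
  have "Hx x t *v v = 0 \<Longrightarrow> v = 0" for v
    using hess_lower[of t v x] mu_pos[of t] by (simp add: mult_le_0_iff)
  then have "invertible (Hx x t)"
    using matrix_left_invertible_ker invertible_left_inverse by blast
  then show ?thesis unfolding invertible_def matrix_inv_def by (rule someI_ex)
qed

lemma hess_hess_inv [simp]: "Hx x t *v (matrix_inv (Hx x t) *v v) = v"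
  using hess_invertible by (simp add: matrix_vector_mul_assoc)

lemma hess_inv_hess [simp]: "matrix_inv (Hx x t) *v (Hx x t *v v) = v"
  using hess_invertible by (simp add: matrix_vector_mul_assoc)

lemma norm_hess_inv_le: "norm (matrix_inv (Hx x t) *v v) \<le> norm v / mu t"
proof -
  let ?w = "matrix_inv (Hx x t) *v v"
  have m: "0 < mu t" by (rule mu_pos)
  have "mu t * (norm ?w)\<^sup>2 \<le> ?w \<bullet> v" using hess_lower[of t ?w x] by simp
  also have "\<dots> \<le> norm ?w * norm v" by (rule norm_cauchy_schwarz)
  finally have "(mu t * norm ?w) * norm ?w \<le> norm v * norm ?w"
    by (simp add: power2_eq_square algebra_simps)
  then have "mu t * norm ?w \<le> norm v" by (cases "norm ?w = 0") (auto simp: m)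
  then show ?thesis using m by (simp add: field_simps)
qed

lemma norm_diff_hess_inv_le: "norm (q - matrix_inv (Hx x t) *v b) \<le> norm (Hx x t *v q - b) / mu t"
  using norm_hess_inv_le[of x t "Hx x t *v q - b"] by (simp add: matrix_vector_mult_diff_distrib)

lemma hess_inv_symmetric: "u \<bullet> (matrix_inv (Hx x t) *v v) = (matrix_inv (Hx x t) *v u) \<bullet> v"
  using hess_symmetric[of "matrix_inv (Hx x t) *v v" x t "matrix_inv (Hx x t) *v u"]
  by (simp add: inner_commute)

lemma hess_lower_near:
  assumes "opnorm (Hx x0 s - Hx x0 \<theta>) \<le> mu \<theta> / 4" and "norm (y - x0) \<le> mu \<theta> / (4 * (LH + 1))"
  shows "mu \<theta> / 2 * (norm v)\<^sup>2 \<le> v \<bullet> (Hx y s *v v)"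
proof -
  have "LH * norm (y - x0) \<le> LH * (mu \<theta> / (4 * (LH + 1)))"
    using assms(2) LH_nonneg by (rule mult_left_mono)
  also have "\<dots> \<le> mu \<theta> / 4" using mu_pos[of \<theta>] LH_nonneg by (simp add: field_simps)
  finally have "opnorm (Hx y s - Hx x0 s) \<le> mu \<theta> / 4"
    using H_lip[where x=y and y=x0 and t=s] by linarith
  then have "opnorm (Hx y s - Hx x0 \<theta>) * (norm v)\<^sup>2 \<le> mu \<theta> / 2 * (norm v)\<^sup>2"
    using opnorm_diff_triangle[of "Hx y s" "Hx x0 \<theta>" "Hx x0 s"] assms(1) by (intro mult_right_mono) auto
  moreover have "v \<bullet> (Hx y s *v v) = v \<bullet> (Hx x0 \<theta> *v v) + v \<bullet> ((Hx y s - Hx x0 \<theta>) *v v)"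
    by (simp add: matrix_vector_mult_diff_rdistrib inner_diff_right)
  moreover have "mu \<theta> * (norm v)\<^sup>2 \<le> v \<bullet> (Hx x0 \<theta> *v v)" by (rule hess_lower)
  moreover have "- (opnorm (Hx y s - Hx x0 \<theta>) * (norm v)\<^sup>2) \<le> v \<bullet> ((Hx y s - Hx x0 \<theta>) *v v)"
    using abs_quadratic_form_le[of v "Hx y s - Hx x0 \<theta>"] by linarith
  ultimately show ?thesis by linarith
qed

lemma gradient_strongly_monotone_near:
  assumes "opnorm (Hx x0 s - Hx x0 \<theta>) \<le> mu \<theta> / 4"
    and "p \<in> cball x0 (mu \<theta> / (4 * (LH + 1)))" "q \<in> cball x0 (mu \<theta> / (4 * (LH + 1)))"
  shows "mu \<theta> / 2 * (norm (q - p))\<^sup>2 \<le> (gx q s - gx p s) \<bullet> (q - p)"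
  using assms(2,3)
  by (intro gradient_strongly_monotone_on[OF convex_cball] hess_lower_near[OF assms(1)])
     (auto simp: dist_norm norm_minus_commute)

text \<open>Otherwise let p be the point where the segment from x0 to xhat h s leaves the ball.
  Strong convexity on the ball and the smallness of gx x0 s give gx p s \<bullet> (p - x0) > 0,
  whereas monotonicity of the gradient between p and xhat h s gives the opposite sign.\<close>
lemma xhat_near:
  assumes "opnorm (Hx x0 s - Hx x0 \<theta>) \<le> mu \<theta> / 4"
    and "norm (gx x0 s) < mu \<theta> / 2 * (mu \<theta> / (4 * (LH + 1)))"
  shows "norm (xhat h s - x0) \<le> mu \<theta> / (4 * (LH + 1))"
proof (rule ccontr)
  define r where "r = mu \<theta> / (4 * (LH + 1))"
  define d where "d = xhat h s - x0"
  define p where "p = x0 + (r / norm d) *\<^sub>R d"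
  assume "\<not> norm (xhat h s - x0) \<le> mu \<theta> / (4 * (LH + 1))"
  then have d: "r < norm d" by (simp add: r_def d_def)
  have r: "0 < r" unfolding r_def using mu_pos[of \<theta>] LH_nonneg by simp
  have "d \<noteq> 0" using d r by auto
  then have p: "norm (p - x0) = r" unfolding p_def using r by simp
  have "mu \<theta> / 2 * r\<^sup>2 \<le> (gx p s - gx x0 s) \<bullet> (p - x0)"
    using gradient_strongly_monotone_near[OF assms(1), of x0 p] p r by (simp add: r_def dist_norm norm_minus_commute)
  moreover have "gx p s \<bullet> (p - x0) \<le> 0"
  proof -
    have "xhat h s - p = (1 - r / norm d) *\<^sub>R d" by (simp add: p_def d_def algebra_simps)
    then have "0 \<le> (1 - r / norm d) * - (gx p s \<bullet> d)"
      using gradient_monotone[of "xhat h s" s p] by (simp add: xhat_critical)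
    moreover have "0 < 1 - r / norm d" using d r by (simp add: divide_less_eq_1)
    ultimately have "gx p s \<bullet> d \<le> 0" by (simp add: mult_le_0_iff)
    then have "(r / norm d) * (gx p s \<bullet> d) \<le> 0" using d r by (intro mult_nonneg_nonpos) auto
    then show ?thesis by (simp add: p_def)
  qed
  moreover have "- (gx x0 s \<bullet> (p - x0)) < mu \<theta> / 2 * r\<^sup>2"
  proof -
    have "- (gx x0 s \<bullet> (p - x0)) \<le> norm (gx x0 s) * r"
      using Cauchy_Schwarz_ineq2[of "gx x0 s" "p - x0"] unfolding p by linarith
    also have "\<dots> < mu \<theta> / 2 * r * r"
      using assms(2) r unfolding r_def[symmetric] by (rule mult_strict_right_mono)
    finally show ?thesis by (simp add: power2_eq_square)
  qed
  ultimately show False by (simp add: inner_diff_left)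
qed

lemma xhat_dist_le_near:
  assumes "opnorm (Hx x0 s - Hx x0 \<theta>) \<le> mu \<theta> / 4"
    and "norm (gx x0 s) < mu \<theta> / 2 * (mu \<theta> / (4 * (LH + 1)))"
  shows "norm (xhat h s - x0) \<le> 2 * norm (gx x0 s) / mu \<theta>"
proof -
  let ?d = "xhat h s - x0"
  have m: "0 < mu \<theta>" by (rule mu_pos)
  have "mu \<theta> / 2 * (norm ?d)\<^sup>2 \<le> - (gx x0 s \<bullet> ?d)"
    using gradient_strongly_monotone_near[OF assms(1), of x0 "xhat h s"] xhat_near[OF assms] mu_pos[of \<theta>] LH_nonneg
    by (simp add: xhat_critical dist_norm norm_minus_commute)
  also have "\<dots> \<le> norm (gx x0 s) * norm ?d" using Cauchy_Schwarz_ineq2[of "gx x0 s" ?d] by linarith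
  finally have "(mu \<theta> / 2 * norm ?d) * norm ?d \<le> norm (gx x0 s) * norm ?d"
    by (simp add: power2_eq_square algebra_simps)
  then have "mu \<theta> / 2 * norm ?d \<le> norm (gx x0 s)" by (cases "norm ?d = 0") (auto simp: m)
  then show ?thesis using m by (simp add: field_simps)
qed

end

locale lower_level_param = lower_level h gx Hx mu LH
  for h :: "real^'n \<Rightarrow> real^'d \<Rightarrow> real"
    and gx :: "real^'n \<Rightarrow> real^'d \<Rightarrow> real^'n"
    and Hx :: "real^'n \<Rightarrow> real^'d \<Rightarrow> real^'n^'n"
    and mu :: "real^'d \<Rightarrow> real"
    and LH :: real +
  fixes Jx :: "real^'n \<Rightarrow> real^'d \<Rightarrow> real^'d^'n"
  assumes Hx_cont: "\<And>x. continuous_on UNIV (\<lambda>t. Hx x t)"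
    and J_deriv: "\<And>x t. ((\<lambda>s. gx x s) has_derivative (\<lambda>w. Jx x t *v w)) (at t)"
begin

lemma xhat_linearization_error:
  fixes \<theta> s :: "real^'d"
  defines "x0 \<equiv> xhat h \<theta>"
  defines "d \<equiv> xhat h s - x0"
  shows "norm (d + matrix_inv (Hx x0 \<theta>) *v (Jx x0 \<theta> *v (s - \<theta>)))
     \<le> (LH * (norm d)\<^sup>2 + opnorm (Hx x0 s - Hx x0 \<theta>) * norm d + norm (gx x0 s - Jx x0 \<theta> *v (s - \<theta>))) / mu \<theta>"
proof -
  define w where "w = Hx x0 \<theta> *v d + Jx x0 \<theta> *v (s - \<theta>)"
  have "gx (x0 + d) s = 0" unfolding d_def by (simp add: xhat_critical)
  then have w: "w = - (gx (x0 + d) s - gx x0 s - Hx x0 s *v d) - (Hx x0 s - Hx x0 \<theta>) *v d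
      - (gx x0 s - Jx x0 \<theta> *v (s - \<theta>))"
    unfolding w_def by (simp add: matrix_vector_mult_diff_rdistrib algebra_simps)
  have "norm (- a - b - c) \<le> norm a + norm b + norm c" for a b c :: "real^'n"
    using norm_add3_le[of "- a" "- b" "- c"] by simp
  then have "norm w \<le> norm (gx (x0 + d) s - gx x0 s - Hx x0 s *v d) + norm ((Hx x0 s - Hx x0 \<theta>) *v d)
      + norm (gx x0 s - Jx x0 \<theta> *v (s - \<theta>))"
    unfolding w .
  also have "\<dots> \<le> LH * (norm d)\<^sup>2 + opnorm (Hx x0 s - Hx x0 \<theta>) * norm d + norm (gx x0 s - Jx x0 \<theta> *v (s - \<theta>))"
    using gradient_linearization_error[of x0 d s] norm_matrix_vector_mult_le[of "Hx x0 s - Hx x0 \<theta>" d]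
    by linarith
  finally have "norm w / mu \<theta> \<le> \<dots> / mu \<theta>" using mu_pos[of \<theta>] by (simp add: divide_right_mono)
  moreover have "d + matrix_inv (Hx x0 \<theta>) *v (Jx x0 \<theta> *v (s - \<theta>)) = matrix_inv (Hx x0 \<theta>) *v w"
    unfolding w_def by (simp add: matrix_vector_right_distrib)
  ultimately show ?thesis using norm_hess_inv_le[of x0 \<theta> w] by simp
qed

lemma tendsto_opnorm_hess_diff: "((\<lambda>s. opnorm (Hx x s - Hx x \<theta>)) \<longlongrightarrow> 0) (at \<theta>)"
  using Hx_cont[of x] by (intro tendsto_opnorm_diff_zero) (simp add: continuous_on_eq_continuous_at isCont_def)

lemma tendsto_critical_linearization_ratio:
  assumes "gx x \<theta> = 0"
  shows "((\<lambda>s. norm (gx x s - Jx x \<theta> *v (s - \<theta>)) / norm (s - \<theta>)) \<longlongrightarrow> 0) (at \<theta>)"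
  using J_deriv[of x \<theta>] assms by (simp add: has_derivative_iff_norm)

lemma xhat_lipschitz_at: "\<exists>C\<ge>0. \<forall>\<^sub>F s in at \<theta>. norm (xhat h s - xhat h \<theta>) \<le> C * norm (s - \<theta>)"
proof -
  define x0 where "x0 = xhat h \<theta>"
  define J0 where "J0 = Jx x0 \<theta>"
  define m where "m = mu \<theta>"
  have m: "0 < m" unfolding m_def by (rule mu_pos)
  have x0: "gx x0 \<theta> = 0" unfolding x0_def by (rule xhat_critical)
  have ev_H: "\<forall>\<^sub>F s in at \<theta>. opnorm (Hx x0 s - Hx x0 \<theta>) \<le> m / 4"
    using order_tendstoD(2)[OF tendsto_opnorm_hess_diff[of x0 \<theta>], of "m / 4"] m by (force elim: eventually_mono)
  have "((\<lambda>s. gx x0 s) \<longlongrightarrow> 0) (at \<theta>)"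
    using has_derivative_continuous[OF J_deriv[of x0 \<theta>]] x0 by (simp add: continuous_at)
  then have ev_g: "\<forall>\<^sub>F s in at \<theta>. norm (gx x0 s) < m / 2 * (m / (4 * (LH + 1)))"
    using m LH_nonneg by (intro order_tendstoD(2)[OF tendsto_norm_zero]) auto
  have ev_J: "\<forall>\<^sub>F s in at \<theta>. norm (gx x0 s - J0 *v (s - \<theta>)) / norm (s - \<theta>) < 1"
    using order_tendstoD(2)[OF tendsto_critical_linearization_ratio[OF x0], of 1] by (simp add: J0_def)
  show ?thesis
  proof (intro exI conjI)
    show "0 \<le> 2 * (opnorm J0 + 1) / m" using m opnorm_nonneg[of J0] by simp
    show "\<forall>\<^sub>F s in at \<theta>. norm (xhat h s - xhat h \<theta>) \<le> 2 * (opnorm J0 + 1) / m * norm (s - \<theta>)"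
      using ev_H ev_g ev_J eventually_neq_at_within[of \<theta> \<theta> UNIV]
    proof eventually_elim
      case (elim s)
      have "norm (gx x0 s - J0 *v (s - \<theta>)) \<le> norm (s - \<theta>)"
        using elim(3,4) by (simp add: divide_less_eq_1)
      then have g: "norm (gx x0 s) \<le> (opnorm J0 + 1) * norm (s - \<theta>)"
        using norm_triangle_sub[of "gx x0 s" "J0 *v (s - \<theta>)"] norm_matrix_vector_mult_le[of J0 "s - \<theta>"]
        by (simp add: algebra_simps)
      have "norm (xhat h s - x0) \<le> 2 * norm (gx x0 s) / m"
        unfolding m_def by (rule xhat_dist_le_near) (use elim in \<open>simp_all add: m_def\<close>)
      also have "\<dots> \<le> 2 * ((opnorm J0 + 1) * norm (s - \<theta>)) / m"
        using g m by (intro divide_right_mono) auto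
      finally show ?case by (simp add: x0_def algebra_simps)
    qed
  qed
qed

lemma xhat_remainder_ratio_le:
  fixes \<theta> s :: "real^'d"
  defines "x0 \<equiv> xhat h \<theta>"
  assumes lip: "norm (xhat h s - x0) \<le> C * norm (s - \<theta>)" and "0 \<le> C" and "s \<noteq> \<theta>"
  shows "norm (xhat h s - x0 + matrix_inv (Hx x0 \<theta>) *v (Jx x0 \<theta> *v (s - \<theta>))) / norm (s - \<theta>)
    \<le> (LH * C\<^sup>2 * norm (s - \<theta>) + opnorm (Hx x0 s - Hx x0 \<theta>) * C
        + norm (gx x0 s - Jx x0 \<theta> *v (s - \<theta>)) / norm (s - \<theta>)) / mu \<theta>"
proof -
  let ?n = "norm (s - \<theta>)" and ?d = "norm (xhat h s - x0)"
  let ?a = "opnorm (Hx x0 s - Hx x0 \<theta>)" and ?E = "norm (gx x0 s - Jx x0 \<theta> *v (s - \<theta>))"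
  have n: "0 < ?n" using \<open>s \<noteq> \<theta>\<close> by simp
  have m: "0 < mu \<theta>" by (rule mu_pos)
  have "norm (xhat h s - x0 + matrix_inv (Hx x0 \<theta>) *v (Jx x0 \<theta> *v (s - \<theta>))) \<le> (LH * ?d\<^sup>2 + ?a * ?d + ?E) / mu \<theta>"
    using xhat_linearization_error[where \<theta>=\<theta> and s=s] by (simp add: x0_def)
  also have "\<dots> \<le> (LH * (C * ?n)\<^sup>2 + ?a * (C * ?n) + ?E) / mu \<theta>"
    using lip m LH_nonneg opnorm_nonneg[of "Hx x0 s - Hx x0 \<theta>"]
    by (intro divide_right_mono add_mono mult_left_mono power_mono) auto
  also have "\<dots> = (LH * C\<^sup>2 * ?n + ?a * C + ?E / ?n) / mu \<theta> * ?n"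
    using n m by (simp add: field_simps power2_eq_square)
  finally show ?thesis using n by (simp add: pos_divide_le_eq)
qed

lemma xhat_has_derivative:
  "(xhat h has_derivative (\<lambda>w. - (matrix_inv (Hx (xhat h \<theta>) \<theta>) *v (Jx (xhat h \<theta>) \<theta> *v w)))) (at \<theta>)"
proof -
  define x0 where "x0 = xhat h \<theta>"
  define J0 where "J0 = Jx x0 \<theta>"
  obtain C where C: "0 \<le> C" and lip: "\<forall>\<^sub>F s in at \<theta>. norm (xhat h s - x0) \<le> C * norm (s - \<theta>)"
    using xhat_lipschitz_at unfolding x0_def by blast
  define U where "U s = (LH * C\<^sup>2 * norm (s - \<theta>) + opnorm (Hx x0 s - Hx x0 \<theta>) * C
      + norm (gx x0 s - J0 *v (s - \<theta>)) / norm (s - \<theta>)) / mu \<theta>" for s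
  have "((\<lambda>s. norm (s - \<theta>)) \<longlongrightarrow> 0) (at \<theta>)"
    by (intro tendsto_norm_zero LIM_zero tendsto_ident_at)
  then have "(U \<longlongrightarrow> (LH * C\<^sup>2 * 0 + 0 * C + 0) / mu \<theta>) (at \<theta>)"
    unfolding U_def J0_def x0_def using mu_pos[of \<theta>]
    by (intro tendsto_intros tendsto_opnorm_hess_diff tendsto_critical_linearization_ratio xhat_critical) auto
  then have U_lim: "(U \<longlongrightarrow> 0) (at \<theta>)" by simp
  have ev: "\<forall>\<^sub>F s in at \<theta>. norm (xhat h s - x0 + matrix_inv (Hx x0 \<theta>) *v (J0 *v (s - \<theta>))) / norm (s - \<theta>) \<le> U s"
    using lip eventually_neq_at_within[of \<theta> \<theta> UNIV]
  proof eventually_elim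
    case (elim s)
    then show ?case unfolding U_def x0_def J0_def by (intro xhat_remainder_ratio_le[OF _ C]) (auto simp: x0_def)
  qed
  have "((\<lambda>s. norm (xhat h s - x0 + matrix_inv (Hx x0 \<theta>) *v (J0 *v (s - \<theta>))) / norm (s - \<theta>))
      \<longlongrightarrow> 0) (at \<theta>)"
    by (rule tendsto_sandwich[OF _ ev tendsto_const U_lim]) simp
  then show ?thesis
    by (simp add: has_derivative_iff_norm x0_def J0_def bounded_linear_minus
        bounded_linear_compose[OF matrix_vector_mul_bounded_linear])
qed

end

locale bilevel = lower_level_param h gx Hx mu LH Jx
  for h :: "real^'n \<Rightarrow> real^'d \<Rightarrow> real"
    and gx :: "real^'n \<Rightarrow> real^'d \<Rightarrow> real^'n"
    and Hx :: "real^'n \<Rightarrow> real^'d \<Rightarrow> real^'n^'n"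
    and mu :: "real^'d \<Rightarrow> real"
    and LH :: real
    and Jx :: "real^'n \<Rightarrow> real^'d \<Rightarrow> real^'d^'n" +
  fixes g :: "real^'n \<Rightarrow> real" and gg :: "real^'n \<Rightarrow> real^'n"
    and LJ LHinv Lg :: real
  assumes g_deriv: "\<And>x. (g has_derivative (\<lambda>v. gg x \<bullet> v)) (at x)"
    and J_lip: "\<And>x y t. opnorm (Jx x t - Jx y t) \<le> LJ * norm (x - y)"
    and Hinv_lip: "\<And>x y t. opnorm (matrix_inv (Hx x t) - matrix_inv (Hx y t)) \<le> LHinv * norm (x - y)"
    and gg_lip: "\<And>x y. norm (gg x - gg y) \<le> Lg * norm (x - y)"
begin

definition hypergradient :: "real^'d \<Rightarrow> real^'d" where
  "hypergradient \<theta> =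
     - (transpose (Jx (xhat h \<theta>) \<theta>) *v (matrix_inv (Hx (xhat h \<theta>) \<theta>) *v gg (xhat h \<theta>)))"

lemma LJ_nonneg: "0 \<le> LJ"
  using lipschitz_const_nonneg[of "\<lambda>x y. opnorm (Jx x undefined - Jx y undefined)"]
  by (simp add: J_lip opnorm_nonneg)

lemma LHinv_nonneg: "0 \<le> LHinv"
  using lipschitz_const_nonneg[of "\<lambda>x y. opnorm (matrix_inv (Hx x undefined) - matrix_inv (Hx y undefined))"]
  by (simp add: Hinv_lip opnorm_nonneg)

lemma Lg_nonneg: "0 \<le> Lg"
  using lipschitz_const_nonneg[of "\<lambda>x y. norm (gg x - gg y)"] by (simp add: gg_lip)

lemma hypergradient_eq:
  assumes "((\<lambda>s. g (xhat h s)) has_derivative (\<lambda>w. gf \<bullet> w)) (at \<theta>)"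
  shows "gf = hypergradient \<theta>"
proof -
  let ?x0 = "xhat h \<theta>"
  let ?Hi = "matrix_inv (Hx ?x0 \<theta>)" and ?J0 = "Jx ?x0 \<theta>"
  have "((\<lambda>s. g (xhat h s)) has_derivative (\<lambda>w. gg ?x0 \<bullet> - (?Hi *v (?J0 *v w)))) (at \<theta>)"
    using has_derivative_compose[OF xhat_has_derivative g_deriv] .
  with assms have "(\<lambda>w. gf \<bullet> w) = (\<lambda>w. gg ?x0 \<bullet> - (?Hi *v (?J0 *v w)))"
    by (rule has_derivative_unique)
  then have "gf \<bullet> w = hypergradient \<theta> \<bullet> w" for w
    by (simp add: fun_eq_iff hess_inv_symmetric dot_lmul_matrix hypergradient_def)
  then show ?thesis using vector_eq_rdot by blast
qed

lemma opnorm_J_le: "opnorm (Jx x t) \<le> opnorm (Jx y t) + LJ * norm (x - y)"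
  using opnorm_add[of "Jx y t" "Jx x t - Jx y t"] J_lip[of x t y] by simp

lemma norm_gg_le: "norm (gg x) \<le> norm (gg y) + Lg * norm (x - y)"
  using norm_triangle_ineq[of "gg y" "gg x - gg y"] gg_lip[of x y] by simp

lemma norm_adjoint_le: "norm (matrix_inv (Hx x t) *v gg x) \<le> (norm (gg y) + Lg * norm (x - y)) / mu t"
  using norm_hess_inv_le[of x t "gg x"] norm_gg_le[of x y] mu_pos[of t]
  by (meson divide_right_mono less_imp_le order_trans)

lemma adjoint_dist_le:
  "norm (matrix_inv (Hx y t) *v gg y - matrix_inv (Hx x t) *v gg x)
     \<le> (Lg / mu t + LHinv * norm (gg x)) * norm (y - x)"
proof -
  have "matrix_inv (Hx y t) *v gg y - matrix_inv (Hx x t) *v gg x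
      = matrix_inv (Hx y t) *v (gg y - gg x) + (matrix_inv (Hx y t) - matrix_inv (Hx x t)) *v gg x"
    by (simp add: matrix_vector_mult_diff_distrib matrix_vector_mult_diff_rdistrib)
  then have "norm (matrix_inv (Hx y t) *v gg y - matrix_inv (Hx x t) *v gg x)
      \<le> norm (matrix_inv (Hx y t) *v (gg y - gg x)) + norm ((matrix_inv (Hx y t) - matrix_inv (Hx x t)) *v gg x)"
    by (simp add: norm_triangle_ineq)
  also have "\<dots> \<le> Lg * norm (y - x) / mu t + LHinv * norm (y - x) * norm (gg x)"
  proof (rule add_mono)
    show "norm (matrix_inv (Hx y t) *v (gg y - gg x)) \<le> Lg * norm (y - x) / mu t"
      using norm_hess_inv_le[of y t "gg y - gg x"] gg_lip[of y x] mu_pos[of t]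
      by (meson divide_right_mono less_imp_le order_trans)
    show "norm ((matrix_inv (Hx y t) - matrix_inv (Hx x t)) *v gg x) \<le> LHinv * norm (y - x) * norm (gg x)"
      using norm_matrix_vector_mult_le[of "matrix_inv (Hx y t) - matrix_inv (Hx x t)" "gg x"] Hinv_lip[of y t x]
      by (meson mult_right_mono norm_ge_zero order_trans)
  qed
  also have "\<dots> = (Lg / mu t + LHinv * norm (gg x)) * norm (y - x)" by (simp add: algebra_simps)
  finally show ?thesis .
qed

lemma hypergradient_error_le:
  fixes \<theta> :: "real^'d" and x q :: "real^'n"
  defines "x0 \<equiv> xhat h \<theta>"
  defines "p0 \<equiv> matrix_inv (Hx x0 \<theta>) *v gg x0" and "p \<equiv> matrix_inv (Hx x \<theta>) *v gg x"
  shows "norm (zdir Jx x \<theta> q - hypergradient \<theta>)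
    \<le> opnorm (Jx x \<theta>) * norm (q - p) + opnorm (Jx x0 \<theta> - Jx x \<theta>) * norm p0
      + opnorm (Jx x \<theta>) * norm (p0 - p)"
proof -
  have "zdir Jx x \<theta> q - hypergradient \<theta>
      = - (transpose (Jx x \<theta>) *v (q - p)) + transpose (Jx x0 \<theta> - Jx x \<theta>) *v p0
        + transpose (Jx x \<theta>) *v (p0 - p)"
    by (simp add: zdir_def hypergradient_def x0_def p0_def transpose_diff
        matrix_vector_mult_diff_rdistrib matrix_vector_mult_diff_distrib del: transpose_matrix_vector)
  then show ?thesis
    using norm_add3_le[of "- (transpose (Jx x \<theta>) *v (q - p))" "transpose (Jx x0 \<theta> - Jx x \<theta>) *v p0"
        "transpose (Jx x \<theta>) *v (p0 - p)"]
      norm_transpose_mult_le[of "Jx x \<theta>" "q - p"] norm_transpose_mult_le[of "Jx x0 \<theta> - Jx x \<theta>" p0]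
      norm_transpose_mult_le[of "Jx x \<theta>" "p0 - p"]
    by simp
qed

lemma inexact_hypergradient_error:
  assumes xt: "norm (xt - xhat h \<theta>) \<le> eps" and q: "norm (Hx xt \<theta> *v q - gg xt) \<le> del"
  shows "norm (zdir Jx xt \<theta> q - hypergradient \<theta>) \<le> omega Lg LHinv LJ gg Jx mu xt \<theta> eps del"
proof -
  define x0 where "x0 = xhat h \<theta>"
  define p0 where "p0 = matrix_inv (Hx x0 \<theta>) *v gg x0"
  define p where "p = matrix_inv (Hx xt \<theta>) *v gg xt"
  have m: "0 < mu \<theta>" by (rule mu_pos)
  have xt': "norm (x0 - xt) \<le> eps" using xt by (simp add: x0_def norm_minus_commute)
  have "norm (q - p) \<le> del / mu \<theta>"
    using norm_diff_hess_inv_le[of q xt \<theta> "gg xt"] q m unfolding p_def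
    by (meson divide_right_mono less_imp_le order_trans)
  moreover have "opnorm (Jx x0 \<theta> - Jx xt \<theta>) \<le> LJ * eps"
    using J_lip[of x0 \<theta> xt] mult_left_mono[OF xt' LJ_nonneg] by linarith
  moreover have "norm p0 \<le> (norm (gg xt) + Lg * eps) / mu \<theta>"
    using norm_adjoint_le[of x0 \<theta> xt] mult_left_mono[OF xt' Lg_nonneg] m unfolding p0_def
    by (meson add_left_mono divide_right_mono less_imp_le order_trans)
  moreover have "norm (p0 - p) \<le> (Lg / mu \<theta> + LHinv * norm (gg xt)) * eps"
    using adjoint_dist_le[of x0 \<theta> xt] xt' Lg_nonneg LHinv_nonneg m unfolding p0_def p_def
    by (meson divide_nonneg_pos mult_left_mono mult_nonneg_nonneg add_nonneg_nonneg norm_ge_zero order_trans)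
  ultimately have "norm (zdir Jx xt \<theta> q - hypergradient \<theta>)
      \<le> opnorm (Jx xt \<theta>) * (del / mu \<theta>) + LJ * eps * ((norm (gg xt) + Lg * eps) / mu \<theta>)
        + opnorm (Jx xt \<theta>) * ((Lg / mu \<theta> + LHinv * norm (gg xt)) * eps)"
    using hypergradient_error_le[where x=xt and q=q and \<theta>=\<theta>] opnorm_nonneg[of "Jx xt \<theta>"]
      opnorm_nonneg[of "Jx x0 \<theta> - Jx xt \<theta>"] unfolding x0_def p0_def p_def
    by (smt (verit, best) mult_left_mono mult_mono norm_ge_zero)
  also have "\<dots> = omega Lg LHinv LJ gg Jx mu xt \<theta> eps del"
    using m by (simp add: omega_def cfun_def power2_eq_square diff_divide_distrib add_divide_distrib algebra_simps)
  finally show ?thesis .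
qed

lemma omega_nonneg:
  assumes "0 \<le> eps" and "0 \<le> del"
  shows "0 \<le> omega Lg LHinv LJ gg Jx mu x t eps del"
  using assms mu_pos[of t] Lg_nonneg LJ_nonneg LHinv_nonneg opnorm_nonneg[of "Jx x t"]
  unfolding omega_def cfun_def by (intro add_nonneg_nonneg mult_nonneg_nonneg divide_nonneg_pos) auto

lemma omega_linear_bound:
  assumes "0 \<le> \<epsilon>" and "0 \<le> \<delta>"
  shows "\<exists>W. \<forall>x r. 0 \<le> r \<longrightarrow> r \<le> 1 \<longrightarrow> norm (x - xhat h \<theta>) \<le> \<epsilon> \<longrightarrow>
           omega Lg LHinv LJ gg Jx mu x \<theta> (r * \<epsilon>) (r * \<delta>) \<le> r * W"
proof -
  define x0 where "x0 = xhat h \<theta>"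
  define A where "A = opnorm (Jx x0 \<theta>) + LJ * \<epsilon>"
  define B where "B = norm (gg x0) + Lg * \<epsilon>"
  define c where "c = Lg * A / mu \<theta> + LHinv * B * A + LJ * B / mu \<theta>"
  have m: "0 < mu \<theta>" by (rule mu_pos)
  have "omega Lg LHinv LJ gg Jx mu x \<theta> (r * \<epsilon>) (r * \<delta>)
      \<le> r * (c * \<epsilon> + A / mu \<theta> * \<delta> + LJ * Lg / mu \<theta> * \<epsilon>\<^sup>2)"
    if r: "0 \<le> r" "r \<le> 1" and x: "norm (x - x0) \<le> \<epsilon>" for x r
  proof -
    have J: "opnorm (Jx x \<theta>) \<le> A"
      using opnorm_J_le[of x \<theta> x0] x LJ_nonneg unfolding A_def by (meson add_left_mono mult_left_mono order_trans)
    have G: "norm (gg x) \<le> B"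
      using norm_gg_le[of x x0] x Lg_nonneg unfolding B_def by (meson add_left_mono mult_left_mono order_trans)
    have "cfun Lg LHinv LJ gg Jx mu x \<theta> \<le> c"
      using J G order_trans[OF norm_ge_zero G] m Lg_nonneg LJ_nonneg LHinv_nonneg opnorm_nonneg[of "Jx x \<theta>"] unfolding cfun_def c_def
      by (intro add_mono divide_right_mono mult_mono mult_left_mono) auto
    moreover have "opnorm (Jx x \<theta>) / mu \<theta> \<le> A / mu \<theta>" using J m by (simp add: divide_right_mono)
    moreover have "(r * \<epsilon>)\<^sup>2 \<le> r * \<epsilon>\<^sup>2"
      using mult_left_le_one_le[OF mult_nonneg_nonneg[OF r(1) zero_le_power2] r] by (simp add: power2_eq_square mult_ac)
    ultimately have "omega Lg LHinv LJ gg Jx mu x \<theta> (r * \<epsilon>) (r * \<delta>)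
        \<le> c * (r * \<epsilon>) + A / mu \<theta> * (r * \<delta>) + LJ * Lg / mu \<theta> * (r * \<epsilon>\<^sup>2)"
      unfolding omega_def using r assms m Lg_nonneg LJ_nonneg
      by (intro add_mono mult_right_mono mult_left_mono) auto
    then show ?thesis by (simp add: algebra_simps)
  qed
  then show ?thesis unfolding x0_def by blast
qed


lemma omega_iterates_tendsto_zero:
  assumes "0 \<le> \<epsilon>" "0 \<le> \<delta>" "0 \<le> \<nu>" "\<nu> < 1"
    and near: "\<And>k. norm (x k - xhat h \<theta>) \<le> \<nu> ^ k * \<epsilon>"
  shows "(\<lambda>k. omega Lg LHinv LJ gg Jx mu (x k) \<theta> (\<nu> ^ k * \<epsilon>) (\<nu> ^ k * \<delta>)) \<longlonglongrightarrow> 0"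
proof -
  obtain W where W: "\<And>x r. 0 \<le> r \<Longrightarrow> r \<le> 1 \<Longrightarrow> norm (x - xhat h \<theta>) \<le> \<epsilon> \<Longrightarrow>
      omega Lg LHinv LJ gg Jx mu x \<theta> (r * \<epsilon>) (r * \<delta>) \<le> r * W"
    using omega_linear_bound[OF assms(1,2), of \<theta>] by blast
  have nu_pow: "0 \<le> \<nu> ^ k" "\<nu> ^ k \<le> 1" for k using assms(3,4) by (auto simp: power_le_one)
  have "norm (x k - xhat h \<theta>) \<le> \<epsilon>" for k
    using near[of k] mult_left_le_one_le[OF assms(1) nu_pow[of k]] by linarith
  then have "\<forall>\<^sub>F k in sequentially. omega Lg LHinv LJ gg Jx mu (x k) \<theta> (\<nu> ^ k * \<epsilon>) (\<nu> ^ k * \<delta>) \<le> \<nu> ^ k * W"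
    using W[OF nu_pow] by simp
  moreover have "\<forall>\<^sub>F k in sequentially. 0 \<le> omega Lg LHinv LJ gg Jx mu (x k) \<theta> (\<nu> ^ k * \<epsilon>) (\<nu> ^ k * \<delta>)"
    using nu_pow assms(1,2) by (simp add: omega_nonneg)
  moreover have "(\<lambda>k. \<nu> ^ k * W) \<longlonglongrightarrow> 0" using assms(3,4) by (intro tendsto_mult_left_zero LIMSEQ_power_zero) simp
  ultimately show ?thesis by (rule_tac tendsto_sandwich[OF _ _ tendsto_const]) simp_all
qed
end

lemma inner_pos_if_relative_error:
  fixes z g :: "'a::real_inner"
  assumes err: "norm (z - g) \<le> (1 - \<eta>) * norm z" and "0 < \<eta>" and "g \<noteq> 0"
  shows "0 < z \<bullet> g"
proof (cases "z = 0")
  case True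
  then show ?thesis using err \<open>g \<noteq> 0\<close> by simp
next
  case False
  then have "(1 - \<eta>) * norm z < norm z" using \<open>0 < \<eta>\<close> by simp
  with err have "norm (z - g) < norm z" by linarith
  then have "(norm (z - g))\<^sup>2 < (norm z)\<^sup>2" by (simp add: power_strict_mono)
  then have "(norm z)\<^sup>2 - 2 * (z \<bullet> g) + (norm g)\<^sup>2 < (norm z)\<^sup>2"
    by (simp add: power2_norm_eq_inner inner_diff_left inner_diff_right inner_commute)
  then show ?thesis using zero_le_power2[of "norm g"] by linarith
qed

lemma exists_accepted_index:
  fixes z :: "nat \<Rightarrow> 'a::real_normed_vector"
  assumes err: "\<And>k. norm (z k - g) \<le> w k" and "w \<longlonglongrightarrow> 0" and "g \<noteq> 0" and "\<eta> < 1"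
  shows "\<exists>k. w k \<le> (1 - \<eta>) * norm (z k)"
proof -
  have "0 < (1 - \<eta>) * norm g / (2 - \<eta>)" using assms by simp
  with \<open>w \<longlonglongrightarrow> 0\<close> obtain k where k: "w k < (1 - \<eta>) * norm g / (2 - \<eta>)"
    by (metis eventually_sequentially order_tendstoD(2) order_refl)
  have "norm g - w k \<le> norm (z k)"
    using err[of k] norm_triangle_ineq2[of g "z k"] by (simp add: norm_minus_commute)
  then have "(1 - \<eta>) * (norm g - w k) \<le> (1 - \<eta>) * norm (z k)"
    using \<open>\<eta> < 1\<close> by (intro mult_left_mono) auto
  moreover have "(2 - \<eta>) * w k < (1 - \<eta>) * norm g" using k \<open>\<eta> < 1\<close> by (simp add: field_simps)
  ultimately have "w k \<le> (1 - \<eta>) * norm (z k)" by (simp add: algebra_simps)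
  then show ?thesis ..
qed

theorem proposition3p17:
  fixes h :: "real^'n \<Rightarrow> real^'d \<Rightarrow> real"
    and gx :: "real^'n \<Rightarrow> real^'d \<Rightarrow> real^'n"
    and Hx :: "real^'n \<Rightarrow> real^'d \<Rightarrow> real^'n^'n"
    and Jx :: "real^'n \<Rightarrow> real^'d \<Rightarrow> real^'d^'n"
    and g :: "real^'n \<Rightarrow> real" and gg :: "real^'n \<Rightarrow> real^'n"
    and gf :: "real^'d \<Rightarrow> real^'d"
    and mu L :: "real^'d \<Rightarrow> real"
    and LH LJ LHinv Lf Lg :: real
    and \<theta> :: "real^'d" and \<epsilon> \<delta> \<eta> \<nu> :: real
    and xt q :: "nat \<Rightarrow> real^'n"
  assumes h_grad: "\<And>x t. ((\<lambda>y. h y t) has_derivative (\<lambda>v. gx x t \<bullet> v)) (at x)"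
    and h_hess: "\<And>x t. ((\<lambda>y. gx y t) has_derivative (\<lambda>v. Hx x t *v v)) (at x)"
    and mu_pos: "\<And>t. 0 < mu t" and mu_le_L: "\<And>t. mu t \<le> L t"
    and hess_lower: "\<And>x t v. mu t * (norm v)\<^sup>2 \<le> v \<bullet> (Hx x t *v v)"
    and hess_upper: "\<And>x t v. v \<bullet> (Hx x t *v v) \<le> L t * (norm v)\<^sup>2"
    and gx_cont: "\<And>x. continuous_on UNIV (\<lambda>t. gx x t)"
    and Hx_cont: "\<And>x. continuous_on UNIV (\<lambda>t. Hx x t)"
    and J_deriv: "\<And>x t. ((\<lambda>s. gx x s) has_derivative (\<lambda>w. Jx x t *v w)) (at t)"
    and H_lip: "\<And>x y t. opnorm (Hx x t - Hx y t) \<le> LH * norm (x - y)"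
    and J_lip: "\<And>x y t. opnorm (Jx x t - Jx y t) \<le> LJ * norm (x - y)"
    and Hinv_lip: "\<And>x y t. opnorm (matrix_inv (Hx x t) - matrix_inv (Hx y t)) \<le> LHinv * norm (x - y)"
    and f_deriv: "\<And>t. ((\<lambda>s. g (xhat h s)) has_derivative (\<lambda>w. gf t \<bullet> w)) (at t)"
    and gf_cont: "continuous_on UNIV gf"
    and gf_lip: "\<And>s t. norm (gf s - gf t) \<le> Lf * norm (s - t)"
    and g_deriv: "\<And>x. (g has_derivative (\<lambda>v. gg x \<bullet> v)) (at x)"
    and gg_cont: "continuous_on UNIV gg"
    and gg_lip: "\<And>x y. norm (gg x - gg y) \<le> Lg * norm (x - y)"
    and Lf_pos: "Lf > 0" and Lg_pos: "Lg > 0"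
    and g_bdd: "bdd_below (range g)"
    and gf_nz: "norm (gf \<theta>) > 0"
    and eps_pos: "\<epsilon> > 0" and del_pos: "\<delta> > 0"
    and eta: "0 < \<eta>" "\<eta> < 1" and nu: "0 < \<nu>" "\<nu> < 1"
    and xt_spec: "\<And>k. norm (gx (xt k) \<theta>) \<le> (\<nu> ^ k * \<epsilon>) * mu \<theta>"
    and q_spec: "\<And>k. norm (Hx (xt k) \<theta> *v q k - gg (xt k)) \<le> \<nu> ^ k * \<delta>"
  shows "\<exists>k. omega Lg LHinv LJ gg Jx mu (xt k) \<theta> (\<nu> ^ k * \<epsilon>) (\<nu> ^ k * \<delta>)
               \<le> (1 - \<eta>) * norm (zdir Jx (xt k) \<theta> (q k))
          \<and> (\<forall>j<k. \<not> omega Lg LHinv LJ gg Jx mu (xt j) \<theta> (\<nu> ^ j * \<epsilon>) (\<nu> ^ j * \<delta>)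
               \<le> (1 - \<eta>) * norm (zdir Jx (xt j) \<theta> (q j)))
          \<and> zdir Jx (xt k) \<theta> (q k) \<bullet> gf \<theta> > 0"
proof -
  \<comment> \<open>L, Lf, g_bdd and the continuity hypotheses on gx, gf and gg are standing assumptions of
    the paper that this termination argument does not need.\<close>
  interpret bilevel h gx Hx mu LH Jx g gg LJ LHinv Lg
    by unfold_locales (rule h_grad h_hess mu_pos hess_lower H_lip Hx_cont J_deriv g_deriv J_lip Hinv_lip gg_lip)+
  define z where "z k = zdir Jx (xt k) \<theta> (q k)" for k
  define w where "w k = omega Lg LHinv LJ gg Jx mu (xt k) \<theta> (\<nu> ^ k * \<epsilon>) (\<nu> ^ k * \<delta>)" for k
  have xt_near: "norm (xt k - xhat h \<theta>) \<le> \<nu> ^ k * \<epsilon>" for k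
    using dist_xhat_le[of "xt k" \<theta>] xt_spec[of k] mu_pos[of \<theta>] by (meson order_trans pos_divide_le_eq)
  have err: "norm (z k - gf \<theta>) \<le> w k" for k
    using inexact_hypergradient_error[OF xt_near q_spec] hypergradient_eq[OF f_deriv]
    by (simp add: z_def w_def)
  have "w \<longlonglongrightarrow> 0"
    unfolding w_def using eps_pos del_pos nu
    by (intro omega_iterates_tendsto_zero xt_near) auto
  then have "\<exists>k. w k \<le> (1 - \<eta>) * norm (z k)"
    using exists_accepted_index[OF err] gf_nz eta by simp
  then obtain k where k: "w k \<le> (1 - \<eta>) * norm (z k)" "\<forall>j<k. \<not> w j \<le> (1 - \<eta>) * norm (z j)"
    unfolding exists_least_iff[of "\<lambda>k. w k \<le> (1 - \<eta>) * norm (z k)"] by blast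
  moreover have "0 < z k \<bullet> gf \<theta>"
    using inner_pos_if_relative_error[OF order_trans[OF err k(1)]] eta gf_nz by simp
  ultimately show ?thesis unfolding z_def w_def by (intro exI[of _ k]) simp
qed

end
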